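(* Let $\theta\in\mathbb R\setminus\mathbb Q$. Then the cyclic cohomology of $\mathcal A_\theta^{alg}$ with coefficients in the twisted dual satisfies $HC^1(\mathcal A_\theta^{alg},{}_{-1}\mathcal A_\theta^{alg*})=0$ and $HC^2(\mathcal A_\theta^{alg},{}_{-1}\mathcal A_\theta^{alg*})\cong\mathbb C^4$.
   Context: Let $\lambda=e^{2\pi i\theta}$. $\mathcal A_\theta^{alg}$ is the complex algebra of finite linear combinations $\sum x_{n,m}U_1^nU_2^m$ generated by invertible $U_1,U_2$ with $U_2U_1=\lambda U_1U_2$. Its linear dual $\mathcal A_\theta^{alg*}$ is the space of formal series $\sum\varphi_{n,m}U_1^nU_2^m$. $\sigma$ is the automorphism $\sigma(U_j)=U_j^{-1}$, and ${}_{-1}\mathcal A_\theta^{alg*}$ is $\mathcal A_\theta^{alg*}$ with bimodule structure $\alpha\cdot a=\sigma(\alpha)a$, $a\cdot\alpha=a\alpha$. $HC^\bullet(\mathcal A_\theta^{alg},{}_{-1}\mathcal A_\theta^{alg*})$ denotes the $\sigma$-twisted cyclic cohomology, i.e. the cyclic cohomology fitting into Connes' $S,B,I$ long exact sequence with the Hochschild cohomology $H^\bullet(\mathcal A_\theta^{alg},{}_{-1}\mathcal A_\theta^{alg*})$. *)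

theory Defs
  imports Complex_Main
begin

text \<open>Monomials U_1^n U_2^m of the algebraic noncommutative torus are indexed by (n,m).
  Since the monomials form a basis, a multilinear functional on (A_theta^alg)^(k+1)
  is the same as an arbitrary function on (k+1)-tuples (lists) of monomial indices.\<close>

type_synonym mono = "int \<times> int"
type_synonym cochain = "mono list \<Rightarrow> complex"

definition padd :: "mono \<Rightarrow> mono \<Rightarrow> mono" where
  "padd x y = (fst x + fst y, snd x + snd y)"

definition pneg :: "mono \<Rightarrow> mono" where
  "pneg x = (- fst x, - snd x)"

text \<open>Structure constants: U^x U^y = omega x y U^(x+y), with lambda = exp(2 pi i theta),
  since U_2^m U_1^p = lambda^(m p) U_1^p U_2^m.  The automorphism sigma sends U^x to U^(-x).\<close>
definition omega :: "real \<Rightarrow> mono \<Rightarrow> mono \<Rightarrow> complex" where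
  "omega \<theta> x y = exp (2 * of_real pi * \<i> * of_real \<theta> * of_int (snd x * fst y))"

text \<open>sigma-twisted Hochschild coboundary on n-cochains (functionals of n+1 arguments):
  (b phi)(a0,...,a(n+1)) = sum_{i=0}^n (-1)^i phi(..., a_i a_(i+1), ...)
                          + (-1)^(n+1) phi(sigma(a_(n+1)) a0, a1, ..., an).\<close>
definition tw_b :: "real \<Rightarrow> nat \<Rightarrow> cochain \<Rightarrow> cochain" where
  "tw_b \<theta> n \<psi> xs = (if length xs = n + 2 then
     (\<Sum>i\<le>n. (-1)^i * omega \<theta> (xs ! i) (xs ! Suc i)
          * \<psi> (take i xs @ [padd (xs ! i) (xs ! Suc i)] @ drop (i + 2) xs))
     + (-1)^(n + 1) * omega \<theta> (pneg (xs ! (n + 1))) (xs ! 0)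
          * \<psi> (padd (pneg (xs ! (n + 1))) (xs ! 0) # take n (tl xs))
   else 0)"

definition tw_lambda :: "nat \<Rightarrow> cochain \<Rightarrow> cochain" where
  "tw_lambda n \<psi> xs = (-1)^n * \<psi> (pneg (last xs) # butlast xs)"

definition cochains :: "nat \<Rightarrow> cochain set" where
  "cochains n = {\<psi>. \<forall>xs. length xs \<noteq> n + 1 \<longrightarrow> \<psi> xs = 0}"

definition cyc_cochains :: "nat \<Rightarrow> cochain set" where
  "cyc_cochains n = {\<psi> \<in> cochains n. \<forall>xs. length xs = n + 1 \<longrightarrow> tw_lambda n \<psi> xs = \<psi> xs}"

definition cyc_cocycles :: "real \<Rightarrow> nat \<Rightarrow> cochain set" where
  "cyc_cocycles \<theta> n = {\<psi> \<in> cyc_cochains n. tw_b \<theta> n \<psi> = (\<lambda>_. 0)}"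

definition cyc_coboundaries :: "real \<Rightarrow> nat \<Rightarrow> cochain set" where
  "cyc_coboundaries \<theta> n = (if n = 0 then {\<lambda>_. 0} else tw_b \<theta> (n - 1) ` cyc_cochains (n - 1))"

definition HC_zero :: "real \<Rightarrow> nat \<Rightarrow> bool" where
  "HC_zero \<theta> n \<longleftrightarrow> cyc_cocycles \<theta> n \<subseteq> cyc_coboundaries \<theta> n"

definition HC_dim :: "real \<Rightarrow> nat \<Rightarrow> nat \<Rightarrow> bool" where
  "HC_dim \<theta> n d \<longleftrightarrow> (\<exists>z :: nat \<Rightarrow> cochain.
     (\<forall>i<d. z i \<in> cyc_cocycles \<theta> n)
   \<and> (\<forall>\<psi>\<in>cyc_cocycles \<theta> n. \<exists>c :: nat \<Rightarrow> complex.
        (\<lambda>xs. \<psi> xs - (\<Sum>i<d. c i * z i xs)) \<in> cyc_coboundaries \<theta> n)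
   \<and> (\<forall>c :: nat \<Rightarrow> complex. (\<lambda>xs. \<Sum>i<d. c i * z i xs) \<in> cyc_coboundaries \<theta> n
        \<longrightarrow> (\<forall>i<d. c i = 0)))"

end

theory Submission
  imports Defs "HOL-Library.Product_Plus"
begin

(* The structure constants omega are a coboundary up to a quadratic
      phase: with gauge xs = exp(pi i theta * phase xs) for an explicit quadratic form phase on
      lists of monomial indices, multiplying a cochain by the gauge turns the twisted operators
      tw_b and tw_lambda into the corresponding operators of the group algebra of Z^2 twisted by
      inversion.  A symmetrised cone
      construction gives a twisted-antisymmetric primitive of G minus a constant; the constant
      depends only on the parity class of a+b+c in (Z/2)^2.  The four parity indicators are cyclic
      cocycles spanning HC^2, and evaluating a coboundary at well-chosen points shows they are
      independent, so HC^2 = C^4. *)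

lemma padd_eq [simp]: "padd x y = x + y"
  by (cases x; cases y) (simp add: padd_def)

lemma pneg_eq [simp]: "pneg x = - x"
  by (cases x) (simp add: pneg_def)

lemma length_1_cases: "length xs = 1 \<Longrightarrow> \<exists>a. xs = [a]"
  by (cases xs) auto

lemma length_2_cases: "length xs = 2 \<Longrightarrow> \<exists>a b. xs = [a,b]"
  by (auto simp: length_Suc_conv numeral_eq_Suc)

lemma length_3_cases: "length xs = 3 \<Longrightarrow> \<exists>a b c. xs = [a,b,c]"
  by (auto simp: length_Suc_conv numeral_eq_Suc)

lemma length_4_cases: "length xs = 4 \<Longrightarrow> \<exists>a b c d. xs = [a,b,c,d]"
  by (auto simp: length_Suc_conv numeral_eq_Suc)

section \<open>The gauge transformation\<close>

text \<open>A quadratic form on lists of monomial indices; its exponential trivialises the structure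
  constants along every face map of the twisted Hochschild complex (lemma \<open>gauge_omega\<close>).\<close>

fun phase :: "mono list \<Rightarrow> int" where
  "phase [] = 0"
| "phase (x # xs) = fst x * snd x + fst x * snd (sum_list xs) - snd x * fst (sum_list xs) + phase xs"

definition gauge :: "real \<Rightarrow> mono list \<Rightarrow> complex" where
  "gauge \<theta> xs = exp (of_int (phase xs) * (of_real pi * \<i> * of_real \<theta>))"

lemma gauge_nonzero [simp]: "gauge \<theta> xs \<noteq> 0"
  by (simp add: gauge_def)

lemma gauge_cong: "phase xs = phase ys \<Longrightarrow> gauge \<theta> xs = gauge \<theta> ys"
  by (simp add: gauge_def)

lemma gauge_omega:
  assumes "phase xs + 2 * snd x * fst y = phase ys"
  shows "gauge \<theta> xs * omega \<theta> x y = gauge \<theta> ys"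
proof -
  let ?c = "of_real pi * \<i> * of_real \<theta> :: complex"
  have "omega \<theta> x y = exp (of_int (2 * snd x * fst y) * ?c)"
    by (simp add: omega_def mult_ac)
  then have "gauge \<theta> xs * omega \<theta> x y = exp (of_int (phase xs + 2 * snd x * fst y) * ?c)"
    by (simp only: gauge_def of_int_add distrib_right exp_add)
  then show ?thesis
    by (simp add: assms gauge_def)
qed

lemma gauge_rotate:
  shows "gauge \<theta> [-x] = gauge \<theta> [x]"
    and "gauge \<theta> [-b,a] = gauge \<theta> [a,b]"
    and "gauge \<theta> [-c,a,b] = gauge \<theta> [a,b,c]"
  by (rule gauge_cong; simp add: algebra_simps)+

definition untwist :: "real \<Rightarrow> cochain \<Rightarrow> cochain" where
  "untwist \<theta> \<phi> xs = gauge \<theta> xs * \<phi> xs"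

lemma tw_lambda_eval:
  shows "tw_lambda 0 \<phi> [x] = \<phi> [-x]"
    and "tw_lambda 1 \<phi> [a,b] = - \<phi> [-b,a]"
    and "tw_lambda 2 \<phi> [a,b,c] = \<phi> [-c,a,b]"
  by (simp_all add: tw_lambda_def)

text \<open>After the gauge transformation the twisted coboundary becomes the coboundary of the group
  algebra of \<open>\<int>\<^sup>2\<close> with the inversion twist (degrees 0, 1, 2).\<close>

lemma untwist_tw_b0:
  "gauge \<theta> [x,y] * tw_b \<theta> 0 \<phi> [x,y] = untwist \<theta> \<phi> [x+y] - untwist \<theta> \<phi> [x-y]"
proof -
  have "gauge \<theta> [x,y] * omega \<theta> x y = gauge \<theta> [x+y]"
    and "gauge \<theta> [x,y] * omega \<theta> (-y) x = gauge \<theta> [x-y]"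
    by (rule gauge_omega; simp add: algebra_simps)+
  then show ?thesis
    by (simp add: tw_b_def untwist_def right_diff_distrib mult.assoc[symmetric])
qed

lemma untwist_tw_b1:
  "gauge \<theta> [a,b,c] * tw_b \<theta> 1 \<phi> [a,b,c]
     = untwist \<theta> \<phi> [a+b,c] - untwist \<theta> \<phi> [a,b+c] + untwist \<theta> \<phi> [a-c,b]"
proof -
  have "gauge \<theta> [a,b,c] * omega \<theta> a b = gauge \<theta> [a+b,c]"
    and "gauge \<theta> [a,b,c] * omega \<theta> b c = gauge \<theta> [a,b+c]"
    and "gauge \<theta> [a,b,c] * omega \<theta> (-c) a = gauge \<theta> [a-c,b]"
    by (rule gauge_omega; simp add: algebra_simps)+
  then show ?thesis
    by (simp add: tw_b_def untwist_def distrib_left right_diff_distrib mult.assoc[symmetric])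
qed

lemma untwist_tw_b2:
  "gauge \<theta> [a,b,c,d] * tw_b \<theta> 2 \<phi> [a,b,c,d]
     = untwist \<theta> \<phi> [a+b,c,d] - untwist \<theta> \<phi> [a,b+c,d] + untwist \<theta> \<phi> [a,b,c+d]
       - untwist \<theta> \<phi> [a-d,b,c]"
proof -
  have "gauge \<theta> [a,b,c,d] * omega \<theta> a b = gauge \<theta> [a+b,c,d]"
    and "gauge \<theta> [a,b,c,d] * omega \<theta> b c = gauge \<theta> [a,b+c,d]"
    and "gauge \<theta> [a,b,c,d] * omega \<theta> c d = gauge \<theta> [a,b,c+d]"
    and "gauge \<theta> [a,b,c,d] * omega \<theta> (-d) a = gauge \<theta> [a-d,b,c]"
    by (rule gauge_omega; simp add: algebra_simps)+
  then show ?thesis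
    by (simp add: tw_b_def untwist_def numeral_2_eq_2 distrib_left right_diff_distrib
        mult.assoc[symmetric])
qed


definition half :: "mono \<Rightarrow> mono" where
  "half u = (fst u div 2, snd u div 2)"

definition parity :: "mono \<Rightarrow> mono" where
  "parity u = (fst u mod 2, snd u mod 2)"

lemma parity_half_decomp: "u = parity u + half u + half u"
  by (cases u) (simp add: half_def parity_def)

lemma parity_shift: "parity (u - (c + c)) = parity u"
  by (cases u; cases c) (simp add: parity_def, presburger)

lemma half_shift: "half (u - (c + c)) = half u - c"
  by (cases u; cases c) (simp add: half_def, presburger)

lemma parity_cases: "parity u \<in> {(0,0),(0,1),(1,0),(1,1)}"
proof -
  have "fst u mod 2 = 0 \<or> fst u mod 2 = 1" "snd u mod 2 = 0 \<or> snd u mod 2 = 1"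
    by presburger+
  then show ?thesis
    by (auto simp: parity_def)
qed

section \<open>Degree one: \<open>HC\<^sup>1 = 0\<close>\<close>

lemma group_cocycle1_primitive:
  fixes f :: "mono list \<Rightarrow> complex"
  assumes cyc: "\<And>p q. f [p,q] = - f [-q,p]"
    and coc: "\<And>a b c. f [a+b,c] - f [a,b+c] + f [a-c,b] = 0"
  defines "t \<equiv> \<lambda>z. f [z - half z, half z]"
  shows "t (x+y) - t (x-y) = f [x,y]"
    and "t (-x) = t x"
proof -
  have f0: "f [a,0] = 0" for a
    using coc[of a 0 0] by simp
  have odd: "f [p,-q] = - f [p,q]" for p q
  proof -
    have "f [p-q+q, -q] - f [p-q, q + -q] + f [p-q - -q, q] = 0"
      using coc[of "p-q" q "-q"] .
    then show ?thesis
      using f0 by (simp add: algebra_simps eq_neg_iff_add_eq_0)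
  qed
  let ?h = "half (x+y)"
  have half_diff: "half (x-y) = ?h - y"
    using half_shift[of "x+y" y] by (simp add: algebra_simps)
  have "f [x + (y - ?h), ?h] - f [x, y - ?h + ?h] + f [x - ?h, y - ?h] = 0"
    using coc[of x "y-?h" ?h] .
  moreover have "f [x - ?h, y - ?h] = - f [x - ?h, ?h - y]"
    using odd[of "x - ?h" "?h - y"] by simp
  ultimately show "t (x+y) - t (x-y) = f [x,y]"
    unfolding t_def half_diff by (simp add: algebra_simps)
  let ?g = "half x"
  have half_neg: "half (-x) = ?g - x"
    using half_shift[of x x] by (simp add: algebra_simps)
  have "f [x - ?g, ?g] = - f [-?g, x - ?g]"
    using cyc[of "x - ?g" ?g] by simp
  moreover have "f [-?g, ?g - x] = - f [-?g, x - ?g]"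
    using odd[of "-?g" "x - ?g"] by simp
  ultimately show "t (-x) = t x"
    unfolding t_def half_neg by (simp add: algebra_simps)
qed

lemma untwist_cyc_cocycle1:
  assumes "\<phi> \<in> cyc_cocycles \<theta> 1"
  shows "untwist \<theta> \<phi> [p,q] = - untwist \<theta> \<phi> [-q,p]"
    and "untwist \<theta> \<phi> [a+b,c] - untwist \<theta> \<phi> [a,b+c] + untwist \<theta> \<phi> [a-c,b] = 0"
proof -
  have "\<phi> [p,q] = - \<phi> [-q,p]"
    using assms tw_lambda_eval(2)[of \<phi> p q] by (simp add: cyc_cocycles_def cyc_cochains_def)
  then show "untwist \<theta> \<phi> [p,q] = - untwist \<theta> \<phi> [-q,p]"
    by (simp add: untwist_def gauge_rotate)
  have "tw_b \<theta> 1 \<phi> [a,b,c] = 0"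
    using assms by (simp add: cyc_cocycles_def fun_eq_iff)
  then show "untwist \<theta> \<phi> [a+b,c] - untwist \<theta> \<phi> [a,b+c] + untwist \<theta> \<phi> [a-c,b] = 0"
    using untwist_tw_b1[of \<theta> a b c \<phi>] by simp
qed

theorem HC1_vanishes: "HC_zero \<theta> 1"
  unfolding HC_zero_def
proof
  fix \<phi> assume \<phi>: "\<phi> \<in> cyc_cocycles \<theta> 1"
  define t where "t z = untwist \<theta> \<phi> [z - half z, half z]" for z
  note t_props = group_cocycle1_primitive[OF untwist_cyc_cocycle1[OF \<phi>], folded t_def]
  define \<tau> where "\<tau> xs = (if length xs = 1 then t (hd xs) / gauge \<theta> xs else 0)" for xs
  have "\<tau> \<in> cyc_cochains 0"
    unfolding cyc_cochains_def cochains_def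
  proof (intro CollectI conjI allI impI)
    fix xs :: "mono list"
    assume "length xs = 0 + 1"
    then obtain x where xs: "xs = [x]"
      using length_1_cases[of xs] by auto
    show "tw_lambda 0 \<tau> xs = \<tau> xs"
      using t_props(2)[of x] by (simp add: xs \<tau>_def tw_lambda_eval gauge_rotate)
  qed (simp add: \<tau>_def)
  moreover have "\<phi> xs = tw_b \<theta> 0 \<tau> xs" for xs
  proof (cases "length xs = 2")
    case True
    then obtain x y where xs: "xs = [x,y]"
      using length_2_cases by blast
    have "gauge \<theta> xs * tw_b \<theta> 0 \<tau> xs = t (x+y) - t (x-y)"
      unfolding xs untwist_tw_b0 by (simp add: untwist_def \<tau>_def)
    also have "\<dots> = gauge \<theta> xs * \<phi> xs"
      unfolding t_props(1) by (simp add: untwist_def xs)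
    finally show ?thesis
      by simp
  next
    case False
    then show ?thesis
      using \<phi> by (simp add: tw_b_def cyc_cocycles_def cyc_cochains_def cochains_def)
  qed
  ultimately show "\<phi> \<in> cyc_coboundaries \<theta> 1"
    by (auto simp: cyc_coboundaries_def)
qed


section \<open>A symmetric cone construction for cyclic Alexander--Spanier 2-cocycles\<close>

text \<open>The cone
  \<open>(k1,k2) \<mapsto> G k1 k2 z\<close> at a base vertex \<open>z\<close> is a primitive of \<open>G\<close> but is not twisted
  antisymmetric; correcting it by edge terms and a constant yields a twisted antisymmetric
  primitive of \<open>G - cone_const\<close>.\<close>

definition cone_const :: "('a \<Rightarrow> 'a \<Rightarrow> 'a \<Rightarrow> complex) \<Rightarrow> ('a \<Rightarrow> 'a) \<Rightarrow> 'a \<Rightarrow> complex" where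
  "cone_const G N z = (3 * G z z z + G z (N z) z) / 4"

definition cone_edge :: "('a \<Rightarrow> 'a \<Rightarrow> 'a \<Rightarrow> complex) \<Rightarrow> ('a \<Rightarrow> 'a) \<Rightarrow> 'a \<Rightarrow> 'a \<Rightarrow> complex" where
  "cone_edge G N z k = (G k (N z) z + G z z z) / 2 - cone_const G N z"

definition cone_primitive ::
  "('a \<Rightarrow> 'a \<Rightarrow> 'a \<Rightarrow> complex) \<Rightarrow> ('a \<Rightarrow> 'a) \<Rightarrow> 'a \<Rightarrow> 'a \<Rightarrow> 'a \<Rightarrow> complex" where
  "cone_primitive G N z k1 k2 = G k1 k2 z - cone_const G N z - cone_edge G N z k1 + cone_edge G N z k2"

lemma cone_primitive_props:
  fixes G :: "'a \<Rightarrow> 'a \<Rightarrow> 'a \<Rightarrow> complex"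
  assumes cyc: "\<And>x y w. G x y w = G y w (N x)" and inv: "\<And>x. N (N x) = x"
    and coc: "\<And>x y w t. G x y w - G x y t + G x w t - G y w t = 0"
  shows "cone_primitive G N z k1 k2 = - cone_primitive G N z k2 (N k1)"
    and "cone_primitive G N z k0 k1 - cone_primitive G N z k0 k2 + cone_primitive G N z k1 k2
           = G k0 k1 k2 - cone_const G N z"
proof -
  have degenerate: "G k z z = G z z z" for k
    using coc[of k z z z] by simp
  have swap: "G k1 k2 z + G k2 (N k1) z = G k1 (N z) z + G z z z"
  proof -
    have "G k2 (N k1) z = G k1 (N z) k2"
      using cyc[of k2 "N k1" z] cyc[of "N k1" z "N k2"] cyc[of z "N k2" k1] cyc[of "N k2" k1 "N z"]
        cyc[of k1 "N z" k2] inv by metis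
    moreover have "G (N z) k2 z = G z z z"
      using cyc[of "N z" k2 z] inv degenerate by metis
    ultimately show ?thesis
      using coc[of k1 "N z" k2 z] by (simp add: algebra_simps)
  qed
  have reflect_edge: "G k (N z) z + G (N k) (N z) z = G z z z + G z (N z) z" for k
  proof -
    have "G (N k) (N z) z = G k z (N z)"
      using cyc[of "N k" "N z" z] cyc[of "N z" z k] cyc[of z k z] inv by metis
    then show ?thesis
      using coc[of k z "N z" z] degenerate[of k] by (simp add: algebra_simps)
  qed
  have swap': "G k1 k2 z = G k1 (N z) z + G z z z - G k2 (N k1) z"
    and reflect_edge': "G (N k1) (N z) z = G z z z + G z (N z) z - G k1 (N z) z"
    using swap reflect_edge[of k1] by (simp_all add: algebra_simps)
  show "cone_primitive G N z k1 k2 = - cone_primitive G N z k2 (N k1)"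
    unfolding cone_primitive_def cone_edge_def cone_const_def swap' reflect_edge'
    by (simp add: field_simps)
  show "cone_primitive G N z k0 k1 - cone_primitive G N z k0 k2 + cone_primitive G N z k1 k2
          = G k0 k1 k2 - cone_const G N z"
    using coc[of k0 k1 k2 z] unfolding cone_primitive_def by (simp add: algebra_simps)
qed

section \<open>Degree two: \<open>HC\<^sup>2 \<cong> \<complex>\<^sup>4\<close>\<close>

text \<open>Homogeneous coordinates: for a fixed parity class \<open>r\<close>, the arguments \<open>[a,b,c]\<close> with
  \<open>a+b+c = r + 2 k1\<close> are written through three vertices \<open>k1, k2, k3\<close>.  In these coordinates
  the untwisted cyclic 2-cocycle identities become those of lemma \<open>cone_primitive_props\<close>,
  with the involution \<open>reflect r\<close>.\<close>

definition homog :: "(mono list \<Rightarrow> complex) \<Rightarrow> mono \<Rightarrow> mono \<Rightarrow> mono \<Rightarrow> mono \<Rightarrow> complex" where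
  "homog P r k1 k2 k3 = P [r+k1+k3, k2-k3, k1-k2]"

definition reflect :: "mono \<Rightarrow> mono \<Rightarrow> mono" where
  "reflect r k = - r - k"

lemma homog_props:
  assumes cyc: "\<And>a b c. P [a,b,c] = P [-c,a,b]"
    and coc: "\<And>a b c d. P [a+b,c,d] - P [a,b+c,d] + P [a,b,c+d] - P [a-d,b,c] = 0"
  shows "\<And>x y w. homog P r x y w = homog P r y w (reflect r x)"
    and "\<And>x. reflect r (reflect r x) = x"
    and "\<And>x y w t. homog P r x y w - homog P r x y t + homog P r x w t - homog P r y w t = 0"
proof -
  fix x y w t
  show "homog P r x y w = homog P r y w (reflect r x)"
    using cyc[of "r+x+w" "y-w" "x-y"] unfolding homog_def reflect_def by (simp add: algebra_simps)
  show "reflect r (reflect r x) = x"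
    by (simp add: reflect_def)
  show "homog P r x y w - homog P r x y t + homog P r x w t - homog P r y w t = 0"
    using coc[of "r+x+t" "w-t" "y-w" "x-y"] unfolding homog_def by (simp add: algebra_simps)
qed

definition class_const :: "(mono list \<Rightarrow> complex) \<Rightarrow> mono \<Rightarrow> complex" where
  "class_const P r = cone_const (homog P r) (reflect r) 0"

definition primitive2 :: "(mono list \<Rightarrow> complex) \<Rightarrow> mono \<Rightarrow> mono \<Rightarrow> complex" where
  "primitive2 P p q =
     cone_primitive (homog P (parity (p+q))) (reflect (parity (p+q))) 0 (half (p+q)) (half (p+q) - q)"

lemma primitive2_props:
  assumes cyc: "\<And>a b c. P [a,b,c] = P [-c,a,b]"
    and coc: "\<And>a b c d. P [a+b,c,d] - P [a,b+c,d] + P [a,b,c+d] - P [a-d,b,c] = 0"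
  shows "primitive2 P p q = - primitive2 P (-q) p"
    and "primitive2 P (a+b) c - primitive2 P a (b+c) + primitive2 P (a-c) b
           = P [a,b,c] - class_const P (parity (a+b+c))"
proof -
  note homog = homog_props[OF cyc coc]
  have cone_antisym: "cone_primitive (homog P r) (reflect r) z k1 k2
      = - cone_primitive (homog P r) (reflect r) z k2 (reflect r k1)" for r z k1 k2
    using cone_primitive_props(1)[of "homog P r" "reflect r", OF homog] .
  have cone_coboundary: "cone_primitive (homog P r) (reflect r) z k0 k1
      - cone_primitive (homog P r) (reflect r) z k0 k2 + cone_primitive (homog P r) (reflect r) z k1 k2
      = homog P r k0 k1 k2 - cone_const (homog P r) (reflect r) z" for r z k0 k1 k2
    using cone_primitive_props(2)[of "homog P r" "reflect r", OF homog] .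
  let ?u = "p+q" and ?m = "parity (p+q)" and ?k = "half (p+q)"
  have rot: "-q + p = ?u - (q+q)"
    by (simp add: algebra_simps)
  have "?k - q - p = ?k - ?u"
    by (simp add: algebra_simps)
  also have "\<dots> = reflect ?m ?k"
    using parity_half_decomp[of ?u] unfolding reflect_def by (simp add: algebra_simps)
  finally have refl: "?k - q - p = reflect ?m ?k" .
  show "primitive2 P p q = - primitive2 P (-q) p"
    unfolding primitive2_def rot parity_shift half_shift refl by (rule cone_antisym)
  let ?v = "a+b+c" and ?M = "parity (a+b+c)" and ?K = "half (a+b+c)"
  have sums: "a + (b+c) = ?v" "a - c + b = ?v - (c+c)" "?K - c - b = ?K - (b+c)"
    by (simp_all add: algebra_simps)
  have "?M + ?K + (?K - (b+c)) = ?v - (b+c)"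
    using parity_half_decomp[of ?v] by (simp add: algebra_simps)
  then have "homog P ?M ?K (?K - c) (?K - (b+c)) = P [a,b,c]"
    unfolding homog_def by (simp add: algebra_simps)
  then show "primitive2 P (a+b) c - primitive2 P a (b+c) + primitive2 P (a-c) b
          = P [a,b,c] - class_const P (parity (a+b+c))"
    unfolding primitive2_def class_const_def sums parity_shift half_shift using cone_coboundary by simp
qed


lemma untwist_cyc_cocycle2:
  assumes "\<Phi> \<in> cyc_cocycles \<theta> 2"
  shows "untwist \<theta> \<Phi> [a,b,c] = untwist \<theta> \<Phi> [-c,a,b]"
    and "untwist \<theta> \<Phi> [a+b,c,d] - untwist \<theta> \<Phi> [a,b+c,d] + untwist \<theta> \<Phi> [a,b,c+d]
           - untwist \<theta> \<Phi> [a-d,b,c] = 0"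
proof -
  have "\<Phi> [a,b,c] = \<Phi> [-c,a,b]"
    using assms tw_lambda_eval(3)[of \<Phi> a b c] by (simp add: cyc_cocycles_def cyc_cochains_def)
  then show "untwist \<theta> \<Phi> [a,b,c] = untwist \<theta> \<Phi> [-c,a,b]"
    by (simp add: untwist_def gauge_rotate)
  have "tw_b \<theta> 2 \<Phi> [a,b,c,d] = 0"
    using assms by (simp add: cyc_cocycles_def fun_eq_iff)
  then show "untwist \<theta> \<Phi> [a+b,c,d] - untwist \<theta> \<Phi> [a,b+c,d] + untwist \<theta> \<Phi> [a,b,c+d]
           - untwist \<theta> \<Phi> [a-d,b,c] = 0"
    using untwist_tw_b2[of \<theta> a b c d \<Phi>] by simp
qed

text \<open>The four parity classes in \<open>(\<int>/2)\<^sup>2\<close> and the corresponding indicator cocycles: the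
  twisted cochain whose untwisted form is the indicator of \<open>parity (a+b+c) = parity_class i\<close>.\<close>

definition parity_class :: "nat \<Rightarrow> mono" where
  "parity_class i = [(0,0),(0,1),(1,0),(1,1)] ! i"

definition parity_cocycle :: "real \<Rightarrow> nat \<Rightarrow> cochain" where
  "parity_cocycle \<theta> i xs =
     (if length xs = 3 \<and> parity (sum_list xs) = parity_class i then 1 / gauge \<theta> xs else 0)"

lemma untwist_parity_cocycle:
  "untwist \<theta> (parity_cocycle \<theta> i) [a,b,c] = (if parity (a+b+c) = parity_class i then 1 else 0)"
  by (simp add: untwist_def parity_cocycle_def add.assoc)

lemma sum_parity_classes:
  "(\<Sum>i<4. F (parity_class i) * (if parity u = parity_class i then 1 else 0)) = (F (parity u) :: complex)"
  using parity_cases[of u] by (auto simp: parity_class_def eval_nat_numeral)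

lemma sum_parity_classes_at:
  assumes "j < 4"
  shows "(\<Sum>i<4. c i * (if parity (parity_class j) = parity_class i then 1 else 0)) = (c j :: complex)"
  using assms by (auto simp: parity_class_def parity_def less_Suc_eq eval_nat_numeral)

lemma parity_cocycle_cocycle: "parity_cocycle \<theta> i \<in> cyc_cocycles \<theta> 2"
proof -
  have "parity_cocycle \<theta> i \<in> cyc_cochains 2"
    unfolding cyc_cochains_def cochains_def
  proof (intro CollectI conjI allI impI)
    fix xs :: "mono list"
    assume "length xs = 2 + 1"
    then obtain a b c where xs: "xs = [a,b,c]"
      using length_3_cases[of xs] by auto
    have "parity (-c + (a + b)) = parity (a + (b + c))"
      using parity_shift[of "a+b+c" c] by (simp add: algebra_simps)
    then show "tw_lambda 2 (parity_cocycle \<theta> i) xs = parity_cocycle \<theta> i xs"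
      by (simp add: xs tw_lambda_eval parity_cocycle_def gauge_rotate)
  qed (simp add: parity_cocycle_def)
  moreover have "tw_b \<theta> 2 (parity_cocycle \<theta> i) xs = 0" for xs
  proof (cases "length xs = 4")
    case True
    then obtain a b c d where xs: "xs = [a,b,c,d]"
      using length_4_cases by blast
    have "parity (a - d + b + c) = parity (a+b+c+d)"
      using parity_shift[of "a+b+c+d" d] by (simp add: algebra_simps)
    then have "gauge \<theta> xs * tw_b \<theta> 2 (parity_cocycle \<theta> i) xs = 0"
      unfolding xs untwist_tw_b2 untwist_parity_cocycle by (simp add: algebra_simps)
    then show ?thesis
      by simp
  qed (simp add: tw_b_def)
  ultimately show ?thesis
    by (simp add: cyc_cocycles_def fun_eq_iff)
qed

lemma parity_cocycles_span:
  assumes \<Phi>: "\<Phi> \<in> cyc_cocycles \<theta> 2"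
  shows "\<exists>c. (\<lambda>xs. \<Phi> xs - (\<Sum>i<4. c i * parity_cocycle \<theta> i xs)) \<in> cyc_coboundaries \<theta> 2"
proof -
  define P where "P = untwist \<theta> \<Phi>"
  note P_props = primitive2_props[OF untwist_cyc_cocycle2[OF \<Phi>], folded P_def]
  define \<psi> where "\<psi> xs = (if length xs = 2 then primitive2 P (xs!0) (xs!1) / gauge \<theta> xs else 0)"
    for xs
  define c where "c i = class_const P (parity_class i)" for i
  have "\<psi> \<in> cyc_cochains 1"
    unfolding cyc_cochains_def cochains_def
  proof (intro CollectI conjI allI impI)
    fix xs :: "mono list"
    assume "length xs = 1 + 1"
    then obtain a b where xs: "xs = [a,b]"
      using length_2_cases[of xs] by auto
    show "tw_lambda 1 \<psi> xs = \<psi> xs"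
      using P_props(1)[of a b] by (simp add: xs tw_lambda_def \<psi>_def gauge_rotate)
  qed (simp add: \<psi>_def)
  moreover have "\<Phi> xs - (\<Sum>i<4. c i * parity_cocycle \<theta> i xs) = tw_b \<theta> 1 \<psi> xs" for xs
  proof (cases "length xs = 3")
    case True
    then obtain a b c' where xs: "xs = [a,b,c']"
      using length_3_cases by blast
    have "gauge \<theta> xs * tw_b \<theta> 1 \<psi> xs = P [a,b,c'] - class_const P (parity (a+b+c'))"
      unfolding xs untwist_tw_b1 by (simp add: untwist_def \<psi>_def P_props(2))
    also have "class_const P (parity (a+b+c'))
        = (\<Sum>i<4. c i * untwist \<theta> (parity_cocycle \<theta> i) [a,b,c'])"
      unfolding untwist_parity_cocycle c_def by (rule sum_parity_classes[symmetric])
    finally have "gauge \<theta> xs * tw_b \<theta> 1 \<psi> xs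
        = gauge \<theta> xs * (\<Phi> xs - (\<Sum>i<4. c i * parity_cocycle \<theta> i xs))"
      by (simp add: P_def untwist_def xs right_diff_distrib sum_distrib_left mult_ac)
    then show ?thesis
      by simp
  next
    case False
    then show ?thesis
      using \<Phi> by (simp add: tw_b_def parity_cocycle_def cyc_cocycles_def cyc_cochains_def
          cochains_def)
  qed
  ultimately show ?thesis
    by (auto simp: cyc_coboundaries_def intro!: exI[of _ c])
qed

text \<open>Independence: if a combination of the parity cocycles is the coboundary of a cyclic
  1-cochain \<open>\<psi>\<close>, evaluating at \<open>[r,0,0]\<close> and \<open>[r,-r,r]\<close> (for \<open>r = parity_class j\<close>) gives
  \<open>c j = p [r,0]\<close> and \<open>c j = -3 p [r,0]\<close> for the untwisted form \<open>p\<close> of \<open>\<psi>\<close>, so \<open>c j = 0\<close>.\<close>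

lemma parity_cocycles_independent:
  assumes "(\<lambda>xs. \<Sum>i<4. c i * parity_cocycle \<theta> i xs) \<in> cyc_coboundaries \<theta> 2" and j: "j < 4"
  shows "c j = 0"
proof -
  obtain \<psi> where \<psi>: "\<psi> \<in> cyc_cochains 1"
    and eq: "(\<lambda>xs. \<Sum>i<4. c i * parity_cocycle \<theta> i xs) = tw_b \<theta> 1 \<psi>"
    using assms by (auto simp: cyc_coboundaries_def)
  define p where "p = untwist \<theta> \<psi>"
  have cyc: "p [a,b] = - p [-b,a]" for a b
    using \<psi> tw_lambda_eval(2)[of \<psi> a b] by (simp add: cyc_cochains_def p_def untwist_def gauge_rotate)
  have eval: "(\<Sum>i<4. c i * (if parity (a+b+d) = parity_class i then 1 else 0))
      = p [a+b,d] - p [a,b+d] + p [a-d,b]" for a b d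
  proof -
    have "gauge \<theta> [a,b,d] * (\<Sum>i<4. c i * parity_cocycle \<theta> i [a,b,d])
        = gauge \<theta> [a,b,d] * tw_b \<theta> 1 \<psi> [a,b,d]"
      using fun_cong[OF eq, of "[a,b,d]"] by simp
    then have "(\<Sum>i<4. c i * untwist \<theta> (parity_cocycle \<theta> i) [a,b,d])
        = p [a+b,d] - p [a,b+d] + p [a-d,b]"
      unfolding untwist_tw_b1 p_def[symmetric] by (simp add: untwist_def sum_distrib_left mult_ac)
    then show ?thesis
      by (simp only: untwist_parity_cocycle)
  qed
  let ?r = "parity_class j"
  have "c j = p [?r,0]"
    using eval[of ?r 0 0] sum_parity_classes_at[OF j, of c] by simp
  moreover have "c j = p [0,?r] - p [?r,0] + p [0,-?r]"
    using eval[of ?r "-?r" ?r] sum_parity_classes_at[OF j, of c] by simp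
  moreover have "p [0,?r] = - p [?r,0]" and "p [0,-?r] = - p [?r,0]"
    using cyc[of 0 ?r] cyc[of "-?r" 0] cyc[of 0 "-?r"] by simp_all
  ultimately show "c j = 0"
    by simp
qed

theorem HC2_four_dimensional: "HC_dim \<theta> 2 4"
  unfolding HC_dim_def
  using parity_cocycle_cocycle parity_cocycles_span parity_cocycles_independent by blast

theorem mainTheorem11:
  fixes \<theta> :: real
  assumes "\<theta> \<notin> \<rat>"
  shows "HC_zero \<theta> 1 \<and> HC_dim \<theta> 2 4"
  using HC1_vanishes HC2_four_dimensional by blast

end
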